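(* For every integer $q\geq 1$, the graph $2*Q_q$ divides $Q_{2q}$.
   Context: $Q_q$ denotes the $q$-dimensional hypercube graph (vertices are $q$-tuples of $0$'s and $1$'s, adjacent iff they differ in exactly one coordinate). For a graph $G$, the $2$-stretch $2*G$ is the graph obtained from $G$ by replacing each edge by a path with $2$ edges (i.e. subdividing each edge once). For graphs $H$ and $G$, "$H$ divides $G$" means there is a collection of subgraphs $H_i$ of $G$, each isomorphic to $H$, such that $E(G)$ is the disjoint union of the edge sets $E(H_i)$. *)

theory Defs
  imports Main
begin

type_synonym 'a graph = "'a set \<times> 'a set set"

definition verts :: "'a graph \<Rightarrow> 'a set" where "verts G = fst G"
definition edges :: "'a graph \<Rightarrow> 'a set set" where "edges G = snd G"

definition simple_graph :: "'a graph \<Rightarrow> bool" where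
  "simple_graph G \<longleftrightarrow> finite (verts G) \<and>
     (\<forall>e\<in>edges G. \<exists>u v. u \<in> verts G \<and> v \<in> verts G \<and> u \<noteq> v \<and> e = {u, v})"

definition hypercube :: "nat \<Rightarrow> bool list graph" where
  "hypercube q =
    ({x. length x = q},
     {{x, y} | x y. length x = q \<and> length y = q \<and>
                    card {i. i < q \<and> x ! i \<noteq> y ! i} = 1})"

text \<open>2-stretch: subdivide each edge once. Original vertices are Inl v,
  the new subdivision vertex of edge e is Inr e.\<close>

definition stretch2 :: "'a graph \<Rightarrow> ('a + 'a set) graph" where
  "stretch2 G =
    (Inl ` verts G \<union> Inr ` edges G,
     {{Inl u, Inr e} | u e. e \<in> edges G \<and> u \<in> e})"

definition subgraph :: "'a graph \<Rightarrow> 'a graph \<Rightarrow> bool" where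
  "subgraph H G \<longleftrightarrow> verts H \<subseteq> verts G \<and> edges H \<subseteq> edges G \<and>
     (\<forall>e\<in>edges H. e \<subseteq> verts H)"

definition graph_iso :: "'b graph \<Rightarrow> 'a graph \<Rightarrow> bool" where
  "graph_iso H K \<longleftrightarrow> (\<exists>f. bij_betw f (verts H) (verts K) \<and>
     (\<forall>e. e \<in> edges H \<longleftrightarrow> (e \<subseteq> verts H \<and> f ` e \<in> edges K)))"

definition divides_graph :: "'b graph \<Rightarrow> 'a graph \<Rightarrow> bool" where
  "divides_graph H G \<longleftrightarrow> (\<exists>(I :: nat set) S.
     (\<forall>i\<in>I. subgraph (S i) G \<and> graph_iso H (S i)) \<and>
     (\<forall>i\<in>I. \<forall>j\<in>I. i \<noteq> j \<longrightarrow> edges (S i) \<inter> edges (S j) = {}) \<and>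
     (\<Union>i\<in>I. edges (S i)) = edges G)"

end

theory Submission
  imports Defs "HOL-Library.Countable"
begin

text \<open>Write a vertex of \<open>Q\<^sub>2\<^sub>q\<close> as a pair \<open>(x, y)\<close> of vertices of \<open>Q\<^sub>q\<close>. For an even-weight
  \<open>a\<close> and a bit \<open>b\<close>, embed \<open>2*Q\<^sub>q\<close> by sending a vertex \<open>u\<close> to \<open>(u, u + a)\<close> and the subdivision
  vertex of an edge \<open>{w, w + e\<^sub>i}\<close> with \<open>w\<^sub>i = b\<close> to \<open>(w, w + e\<^sub>i + a)\<close>. All image vertices of
  original vertices have even weight, and every edge of \<open>Q\<^sub>2\<^sub>q\<close> has exactly one even endpoint.
  An edge with even endpoint \<open>(x, y)\<close> and direction \<open>k\<close> therefore lies in exactly one copy: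
  necessarily \<open>a = x + y\<close>, and \<open>b\<close> is read off from \<open>x\<^sub>k\<close> and from whether \<open>k\<close> lies in the
  first or the second half of the coordinates.
  So the \<open>2\<^sup>q\<close> copies indexed by \<open>(a, b)\<close> partition the edges of \<open>Q\<^sub>2\<^sub>q\<close>.\<close>

lemma verts_pair [simp]: "verts (V, E) = V"
  by (simp add: verts_def)

lemma edges_pair [simp]: "edges (V, E) = E"
  by (simp add: edges_def)

lemma graph_iso_image:
  assumes inj: "inj_on f (verts H)" and edges_H: "\<forall>e\<in>edges H. e \<subseteq> verts H"
  shows "graph_iso H (f ` verts H, (`) f ` edges H)"
  unfolding graph_iso_def
proof (intro exI conjI allI)
  show "bij_betw f (verts H) (verts (f ` verts H, (`) f ` edges H))"
    using inj by (simp add: bij_betw_def)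
  fix e
  show "e \<in> edges H \<longleftrightarrow> e \<subseteq> verts H \<and> f ` e \<in> edges (f ` verts H, (`) f ` edges H)"
  proof
    assume "e \<subseteq> verts H \<and> f ` e \<in> edges (f ` verts H, (`) f ` edges H)"
    then obtain e' where "e' \<in> edges H" "f ` e = f ` e'" "e \<subseteq> verts H"
      by auto
    with inj edges_H have "e = e'"
      by (simp add: inj_on_image_eq_iff)
    with \<open>e' \<in> edges H\<close> show "e \<in> edges H"
      by simp
  qed (use edges_H in auto)
qed

lemma divides_graph_by_embeddings:
  fixes f :: "'c::countable \<Rightarrow> 'b \<Rightarrow> 'a"
  assumes edges_H: "\<forall>e\<in>edges H. e \<subseteq> verts H"
    and inj: "\<And>c. c \<in> C \<Longrightarrow> inj_on (f c) (verts H)"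
    and verts: "\<And>c. c \<in> C \<Longrightarrow> f c ` verts H \<subseteq> verts G"
    and edges: "\<And>c. c \<in> C \<Longrightarrow> (`) (f c) ` edges H \<subseteq> edges G"
    and cover: "\<And>X. X \<in> edges G \<Longrightarrow> \<exists>c\<in>C. X \<in> (`) (f c) ` edges H"
    and unique: "\<And>c d X. c \<in> C \<Longrightarrow> d \<in> C \<Longrightarrow>
                   X \<in> (`) (f c) ` edges H \<Longrightarrow> X \<in> (`) (f d) ` edges H \<Longrightarrow> c = d"
  shows "divides_graph H G"
proof -
  define S where "S n = (f (from_nat n) ` verts H, (`) (f (from_nat n)) ` edges H)" for n
  have S_to_nat: "S (to_nat c) = (f c ` verts H, (`) (f c) ` edges H)" for c
    by (simp add: S_def)
  have "subgraph (S i) G \<and> graph_iso H (S i)" if "i \<in> to_nat ` C" for i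
  proof -
    obtain c where c: "c \<in> C" "i = to_nat c"
      using \<open>i \<in> to_nat ` C\<close> by blast
    have "f c ` e \<subseteq> f c ` verts H" if "e \<in> edges H" for e
      using edges_H that by blast
    then have "subgraph (S i) G"
      using verts[OF c(1)] edges[OF c(1)] by (auto simp: subgraph_def S_to_nat c(2))
    moreover have "graph_iso H (S i)"
      using graph_iso_image[OF inj[OF c(1)] edges_H] by (simp add: S_to_nat c(2))
    ultimately show ?thesis ..
  qed
  moreover have "edges (S i) \<inter> edges (S j) = {}"
    if ij: "i \<in> to_nat ` C" "j \<in> to_nat ` C" "i \<noteq> j" for i j
  proof (rule equals0I)
    fix X assume X: "X \<in> edges (S i) \<inter> edges (S j)"
    obtain c d where cd: "c \<in> C" "d \<in> C" "i = to_nat c" "j = to_nat d"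
      using ij(1,2) by blast
    with X have "c = d"
      using unique[OF cd(1,2), of X] by (simp add: S_to_nat)
    with cd ij(3) show False
      by simp
  qed
  moreover have "(\<Union>i\<in>to_nat ` C. edges (S i)) = edges G"
  proof (intro antisym subsetI)
    fix X assume "X \<in> edges G"
    with cover obtain c where "c \<in> C" "X \<in> (`) (f c) ` edges H"
      by blast
    then show "X \<in> (\<Union>i\<in>to_nat ` C. edges (S i))"
      by (simp add: S_to_nat) blast
  qed (use edges in \<open>auto simp: S_to_nat\<close>)
  ultimately show ?thesis
    unfolding divides_graph_def by (intro exI[of _ "to_nat ` C"] exI[of _ S]) blast
qed

definition flip_bit :: "bool list \<Rightarrow> nat \<Rightarrow> bool list" where
  "flip_bit x i = x[i := \<not> x ! i]"

lemma length_flip_bit [simp]: "length (flip_bit x i) = length x"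
  by (simp add: flip_bit_def)

lemma nth_flip_bit: "j < length x \<Longrightarrow> flip_bit x i ! j = (if j = i then \<not> x ! i else x ! j)"
  by (simp add: flip_bit_def nth_list_update)

lemma flip_bit_flip_bit [simp]: "i < length x \<Longrightarrow> flip_bit (flip_bit x i) i = x"
  by (simp add: flip_bit_def)

lemma flip_bit_neq: "i < length x \<Longrightarrow> flip_bit x i \<noteq> x"
  by (metis nth_flip_bit)

lemma flip_bit_inject: "i < length x \<Longrightarrow> j < length x \<Longrightarrow> flip_bit x i = flip_bit x j \<Longrightarrow> i = j"
  by (metis nth_flip_bit)

lemma flip_bit_append_left: "i < length x \<Longrightarrow> flip_bit (x @ y) i = flip_bit x i @ y"
  by (simp add: flip_bit_def list_update_append nth_append)

lemma flip_bit_append_right: "flip_bit (x @ y) (length x + i) = x @ flip_bit y i"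
  by (simp add: flip_bit_def list_update_append nth_append)

definition xor_list :: "bool list \<Rightarrow> bool list \<Rightarrow> bool list" where
  "xor_list x y = map2 (\<noteq>) x y"

lemma length_xor_list [simp]: "length (xor_list x y) = min (length x) (length y)"
  by (simp add: xor_list_def)

lemma nth_xor_list [simp]: "j < length x \<Longrightarrow> j < length y \<Longrightarrow> xor_list x y ! j = (x ! j \<noteq> y ! j)"
  by (simp add: xor_list_def)

lemma flip_bit_xor_list: "length x = length a \<Longrightarrow> flip_bit (xor_list x a) i = xor_list (flip_bit x i) a"
  by (rule nth_equalityI) (auto simp: nth_flip_bit)

lemma xor_list_cancel: "length x = length a \<Longrightarrow> xor_list (xor_list x a) a = x"
  by (rule nth_equalityI) auto

lemma xor_list_commute: "xor_list x y = xor_list y x"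
  by (rule nth_equalityI) auto

lemma xor_list_inject:
  assumes "length a = length x" "length a' = length x" "xor_list x a = xor_list x a'"
  shows "a = a'"
proof (rule nth_equalityI)
  fix j assume "j < length a"
  then have "xor_list x a ! j = xor_list x a' ! j"
    using assms(3) by simp
  with \<open>j < length a\<close> show "a ! j = a' ! j"
    using assms(1,2) by auto
qed (use assms in simp)

lemma even_count_flip_bit:
  "i < length x \<Longrightarrow> even (count_list (flip_bit x i) True) \<longleftrightarrow> odd (count_list x True)"
proof (induction x arbitrary: i)
  case (Cons y x)
  then show ?case
    by (cases i) (auto simp: flip_bit_def)
qed simp

lemma even_count_xor_list:
  "length x = length y \<Longrightarrow>
     even (count_list (xor_list x y) True) \<longleftrightarrow> even (count_list x True + count_list y True)"
  by (induction x y rule: list_induct2) (auto simp: xor_list_def)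

lemma verts_hypercube: "verts (hypercube n) = {x. length x = n}"
  by (simp add: hypercube_def)

lemma hypercube_adjacent_iff:
  assumes "length x = n" "length y = n"
  shows "card {i. i < n \<and> x ! i \<noteq> y ! i} = 1 \<longleftrightarrow> (\<exists>i<n. y = flip_bit x i)"
proof
  assume "card {i. i < n \<and> x ! i \<noteq> y ! i} = 1"
  then obtain i where i: "{i. i < n \<and> x ! i \<noteq> y ! i} = {i}"
    by (rule card_1_singletonE)
  then have "y = flip_bit x i"
    using assms by (intro nth_equalityI) (auto simp: nth_flip_bit)
  with i show "\<exists>i<n. y = flip_bit x i"
    by blast
next
  assume "\<exists>i<n. y = flip_bit x i"
  then obtain i where "i < n" "y = flip_bit x i"
    by blast
  then have "{i. i < n \<and> x ! i \<noteq> y ! i} = {i}"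
    using assms by (auto simp: nth_flip_bit split: if_splits)
  then show "card {i. i < n \<and> x ! i \<noteq> y ! i} = 1"
    by simp
qed

lemma edges_hypercube: "edges (hypercube n) = {{x, flip_bit x i} | x i. length x = n \<and> i < n}"
proof -
  have "edges (hypercube n) =
    {{x, y} | x y. length x = n \<and> length y = n \<and> card {i. i < n \<and> x ! i \<noteq> y ! i} = 1}"
    by (simp add: hypercube_def)
  also have "\<dots> = {{x, flip_bit x i} | x i. length x = n \<and> i < n}"
  proof (intro set_eqI iffI)
    fix e :: "bool list set"
    assume "e \<in> {{x, y} | x y. length x = n \<and> length y = n \<and>
                             card {i. i < n \<and> x ! i \<noteq> y ! i} = 1}"
    then obtain x y where e: "e = {x, y}" "length x = n" "length y = n"
      and card: "card {i. i < n \<and> x ! i \<noteq> y ! i} = 1"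
      by blast
    have "\<exists>i<n. y = flip_bit x i"
      using hypercube_adjacent_iff[OF e(2,3)] card by simp
    with e show "e \<in> {{x, flip_bit x i} | x i. length x = n \<and> i < n}"
      by blast
  next
    fix e assume "e \<in> {{x, flip_bit x i} | x i. length x = n \<and> i < n}"
    then obtain x i where e: "e = {x, flip_bit x i}" "length x = n" "i < n"
      by blast
    have "card {j. j < n \<and> x ! j \<noteq> flip_bit x i ! j} = 1"
      using hypercube_adjacent_iff[OF e(2), of "flip_bit x i"] e(2,3) by auto
    then show "e \<in> {{x, y} | x y. length x = n \<and> length y = n \<and>
                             card {i. i < n \<and> x ! i \<noteq> y ! i} = 1}"
      using e(2) unfolding e(1) by (intro CollectI exI[of _ x] exI[of _ "flip_bit x i"]) simp
  qed
  finally show ?thesis .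
qed

lemma hypercube_edge_at:
  assumes "e \<in> edges (hypercube n)" "u \<in> e"
  obtains i where "i < n" "length u = n" "e = {u, flip_bit u i}"
proof -
  obtain x i where e: "e = {x, flip_bit x i}" "length x = n" "i < n"
    using assms(1) by (auto simp: edges_hypercube)
  with assms(2) consider "u = x" | "u = flip_bit x i"
    by blast
  then show thesis
  proof cases
    case 1
    with e that show thesis
      by blast
  next
    case 2
    with e that[of i] show thesis
      by (simp add: insert_commute)
  qed
qed

lemma hypercube_edges_subset_verts: "\<forall>e\<in>edges (hypercube n). e \<subseteq> verts (hypercube n)"
  by (auto simp: edges_hypercube verts_hypercube)

lemma hypercube_edge_even_endpoint:
  assumes "X \<in> edges (hypercube n)"
  obtains V k where "X = {V, flip_bit V k}" "length V = n" "k < n" "even (count_list V True)"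
proof -
  obtain x i where X: "X = {x, flip_bit x i}" "length x = n" "i < n"
    using assms by (auto simp: edges_hypercube)
  show thesis
  proof (cases "even (count_list x True)")
    case True
    with X that show thesis
      by blast
  next
    case False
    with X have "even (count_list (flip_bit x i) True)"
      using even_count_flip_bit by blast
    with X that[of "flip_bit x i" i] show thesis
      by (simp add: insert_commute)
  qed
qed

lemma hypercube_edge_even_endpoint_unique:
  assumes "length V = n" "k < n" "k' < n"
    and "even (count_list V True)" "even (count_list V' True)"
    and edge: "{V, flip_bit V k} = {V', flip_bit V' k'}"
  shows "V = V' \<and> k = k'"
proof -
  have "odd (count_list (flip_bit V k) True)"
    using assms(1,2,4) even_count_flip_bit by blast
  with assms(5) have "V' \<noteq> flip_bit V k"
    by metis
  with edge have "V' = V"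
    by (simp add: doubleton_eq_iff)
  moreover have "flip_bit V k \<noteq> V"
    using flip_bit_neq assms(1,2) by simp
  ultimately have "flip_bit V k = flip_bit V k'"
    using edge by (simp add: doubleton_eq_iff)
  with \<open>V' = V\<close> show ?thesis
    using flip_bit_inject assms(1-3) by blast
qed

lemma verts_stretch2: "verts (stretch2 G) = Inl ` verts G \<union> Inr ` edges G"
  by (simp add: stretch2_def)

lemma edges_stretch2: "edges (stretch2 G) = {{Inl u, Inr e} | u e. e \<in> edges G \<and> u \<in> e}"
  by (simp add: stretch2_def)

lemma stretch2_edges_subset_verts:
  "\<forall>e\<in>edges G. e \<subseteq> verts G \<Longrightarrow> \<forall>e\<in>edges (stretch2 G). e \<subseteq> verts (stretch2 G)"
  by (auto simp: verts_stretch2 edges_stretch2)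

definition lift :: "bool list \<Rightarrow> bool list \<Rightarrow> bool list" where
  "lift a u = u @ xor_list u a"

lemma length_lift [simp]: "length u = length a \<Longrightarrow> length (lift a u) = 2 * length a"
  by (simp add: lift_def)

lemma take_lift: "length u = length a \<Longrightarrow> take (length a) (lift a u) = u"
  by (simp add: lift_def)

lemma drop_lift: "length u = length a \<Longrightarrow> xor_list (drop (length a) (lift a u)) a = u"
  by (simp add: lift_def xor_list_cancel)

lemma even_count_lift:
  assumes "length u = length a" "even (count_list a True)"
  shows "even (count_list (lift a u) True)"
  using assms even_count_xor_list[of u a] by (simp add: lift_def)

text \<open>On an edge \<open>{w, w + e\<^sub>i}\<close> of \<open>Q\<^sub>n\<close>, \<open>endpoint n b\<close> selects the endpoint whose \<open>i\<close>-th
  coordinate is \<open>b\<close>; on other sets its value is irrelevant.\<close>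

definition endpoint :: "nat \<Rightarrow> bool \<Rightarrow> bool list set \<Rightarrow> bool list" where
  "endpoint n b e = map (\<lambda>j. if \<exists>w\<in>e. w ! j = b then b else \<not> b) [0..<n]"

lemma length_endpoint [simp]: "length (endpoint n b e) = n"
  by (simp add: endpoint_def)

lemma endpoint_edge:
  assumes "length w = n" "i < n"
  shows "endpoint n b {w, flip_bit w i} = (if w ! i = b then w else flip_bit w i)"
  using assms by (intro nth_equalityI) (auto simp: endpoint_def nth_flip_bit)

definition cube_embedding :: "nat \<Rightarrow> bool list \<Rightarrow> bool \<Rightarrow> bool list + bool list set \<Rightarrow> bool list" where
  "cube_embedding n a b = case_sum (lift a) (\<lambda>e. endpoint n b e @ xor_list (endpoint n (\<not> b) e) a)"

lemma cube_embedding_edge: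
  assumes "length u = n" "length a = n" "i < n"
  shows "cube_embedding n a b ` {Inl u, Inr {u, flip_bit u i}} =
           {lift a u, flip_bit (lift a u) (if u ! i = b then n + i else i)}"
proof (cases "u ! i = b")
  case True
  have "endpoint n b {u, flip_bit u i} @ xor_list (endpoint n (\<not> b) {u, flip_bit u i}) a
      = u @ xor_list (flip_bit u i) a"
    using True assms by (simp add: endpoint_edge)
  also have "\<dots> = flip_bit (lift a u) (n + i)"
    using assms flip_bit_append_right[of u "xor_list u a" i] by (simp add: lift_def flip_bit_xor_list)
  finally show ?thesis
    using True by (simp add: cube_embedding_def)
next
  case False
  have "endpoint n b {u, flip_bit u i} @ xor_list (endpoint n (\<not> b) {u, flip_bit u i}) a
      = flip_bit u i @ xor_list u a"
    using False assms by (simp add: endpoint_edge)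
  also have "\<dots> = flip_bit (lift a u) i"
    using assms by (simp add: lift_def flip_bit_append_left)
  finally show ?thesis
    using False by (simp add: cube_embedding_def)
qed

lemma cube_embedding_decode:
  assumes "length a = n" "x \<in> verts (stretch2 (hypercube n))"
  shows "{take n (cube_embedding n a b x), xor_list (drop n (cube_embedding n a b x)) a}
           = case_sum (\<lambda>u. {u}) id x"
proof (cases x)
  case (Inl u)
  with assms have "length u = length a"
    by (auto simp: verts_stretch2 verts_hypercube)
  with Inl assms(1) show ?thesis
    by (auto simp: cube_embedding_def take_lift drop_lift)
next
  case (Inr e)
  with assms obtain w i where e: "e = {w, flip_bit w i}" "length w = n" "i < n"
    by (auto simp: verts_stretch2 edges_hypercube)
  have "{endpoint n b e, endpoint n (\<not> b) e} = e"
    using e by (auto simp: endpoint_edge)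
  with Inr assms(1) show ?thesis
    by (simp add: cube_embedding_def xor_list_cancel)
qed

lemma inj_on_cube_embedding:
  assumes "length a = n"
  shows "inj_on (cube_embedding n a b) (verts (stretch2 (hypercube n)))"
proof (rule inj_on_imageI2)
  have "inj_on (case_sum (\<lambda>u. {u}) id) (verts (stretch2 (hypercube n)))"
  proof (rule inj_onI)
    have no_singleton: "e \<noteq> {u}" if "e \<in> edges (hypercube n)" for e and u :: "bool list"
      using that flip_bit_neq by (fastforce simp: edges_hypercube doubleton_eq_iff)
    fix x y assume "x \<in> verts (stretch2 (hypercube n))" "y \<in> verts (stretch2 (hypercube n))"
      and "case_sum (\<lambda>u. {u}) id x = case_sum (\<lambda>u. {u}) id y"
    then show "x = y"
      by (auto simp: verts_stretch2 dest: no_singleton no_singleton[THEN not_sym])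
  qed
  then show "inj_on ((\<lambda>V. {take n V, xor_list (drop n V) a}) \<circ> cube_embedding n a b)
               (verts (stretch2 (hypercube n)))"
    using cube_embedding_decode[OF assms] by (simp add: inj_on_def)
qed

lemma length_cube_embedding:
  assumes "length a = n" "x \<in> verts (stretch2 (hypercube n))"
  shows "length (cube_embedding n a b x) = 2 * n"
  using assms by (auto simp: cube_embedding_def verts_stretch2 verts_hypercube)

definition copy_edges :: "nat \<Rightarrow> bool list \<Rightarrow> bool \<Rightarrow> bool list set set" where
  "copy_edges n a b =
     {{lift a u, flip_bit (lift a u) (if u ! i = b then n + i else i)} | u i. length u = n \<and> i < n}"

lemma image_edges_cube_embedding:
  assumes "length a = n"
  shows "(`) (cube_embedding n a b) ` edges (stretch2 (hypercube n)) = copy_edges n a b"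
proof (intro set_eqI iffI)
  fix X assume "X \<in> (`) (cube_embedding n a b) ` edges (stretch2 (hypercube n))"
  then obtain u e where X: "X = cube_embedding n a b ` {Inl u, Inr e}"
    and e: "e \<in> edges (hypercube n)" "u \<in> e"
    by (auto simp: edges_stretch2)
  obtain i where i: "i < n" "length u = n" "e = {u, flip_bit u i}"
    using hypercube_edge_at[OF e] .
  have "X = {lift a u, flip_bit (lift a u) (if u ! i = b then n + i else i)}"
    unfolding X i(3) using cube_embedding_edge[OF i(2) assms i(1)] .
  with i show "X \<in> copy_edges n a b"
    unfolding copy_edges_def by blast
next
  fix X assume "X \<in> copy_edges n a b"
  then obtain u i where u: "length u = n" "i < n"
    and X: "X = {lift a u, flip_bit (lift a u) (if u ! i = b then n + i else i)}"
    unfolding copy_edges_def by blast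
  have "{u, flip_bit u i} \<in> edges (hypercube n)"
    using u by (auto simp: edges_hypercube)
  then have "{Inl u, Inr {u, flip_bit u i}} \<in> edges (stretch2 (hypercube n))"
    by (auto simp: edges_stretch2)
  moreover have "X = cube_embedding n a b ` {Inl u, Inr {u, flip_bit u i}}"
    unfolding X by (rule cube_embedding_edge[OF u(1) assms u(2), symmetric])
  ultimately show "X \<in> (`) (cube_embedding n a b) ` edges (stretch2 (hypercube n))"
    by blast
qed

lemma copy_edges_subset:
  assumes "length a = n"
  shows "copy_edges n a b \<subseteq> edges (hypercube (2 * n))"
proof
  fix X assume "X \<in> copy_edges n a b"
  then obtain u i where u: "length u = n" "i < n"
    and X: "X = {lift a u, flip_bit (lift a u) (if u ! i = b then n + i else i)}"
    unfolding copy_edges_def by blast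
  have "length (lift a u) = 2 * n" "(if u ! i = b then n + i else i) < 2 * n"
    using u assms by auto
  with X show "X \<in> edges (hypercube (2 * n))"
    unfolding edges_hypercube by blast
qed

lemma copy_edges_disjoint:
  assumes a: "length a = n" "even (count_list a True)"
    and a': "length a' = n" "even (count_list a' True)"
    and X: "X \<in> copy_edges n a b" "X \<in> copy_edges n a' b'"
  shows "a = a' \<and> b = b'"
proof -
  obtain u i where u: "length u = n" "i < n"
    and X_u: "X = {lift a u, flip_bit (lift a u) (if u ! i = b then n + i else i)}"
    using X(1) unfolding copy_edges_def by blast
  obtain u' i' where u': "length u' = n" "i' < n"
    and X_u': "X = {lift a' u', flip_bit (lift a' u') (if u' ! i' = b' then n + i' else i')}"
    using X(2) unfolding copy_edges_def by blast
  have "lift a u = lift a' u' \<and>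
      (if u ! i = b then n + i else i) = (if u' ! i' = b' then n + i' else i')"
  proof (rule hypercube_edge_even_endpoint_unique)
    show "even (count_list (lift a u) True)" "even (count_list (lift a' u') True)"
      using u u' a a' even_count_lift by simp_all
  qed (use X_u X_u' u u' a in auto)
  then have lift_eq: "lift a u = lift a' u'"
    and dir_eq: "(if u ! i = b then n + i else i) = (if u' ! i' = b' then n + i' else i')"
    by blast+
  have "u = u'"
    using take_lift[of u a] take_lift[of u' a'] lift_eq u u' a a' by simp
  moreover from this have "a = a'"
    using lift_eq u a a' xor_list_inject[of a u a'] by (simp add: lift_def)
  moreover from \<open>u = u'\<close> have "b = b'"
    using dir_eq u(2) u'(2) by (auto split: if_splits)
  ultimately show ?thesis
    by blast
qed

lemma copy_edges_cover:
  assumes "X \<in> edges (hypercube (2 * n))"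
  obtains a b where "length a = n" "even (count_list a True)" "X \<in> copy_edges n a b"
proof -
  obtain V k where X: "X = {V, flip_bit V k}" "length V = 2 * n" "k < 2 * n"
    and even_V: "even (count_list V True)"
    using hypercube_edge_even_endpoint[OF assms] .
  define u where "u = take n V"
  define a where "a = xor_list u (drop n V)"
  have lengths: "length u = n" "length a = n"
    using X(2) by (simp_all add: u_def a_def)
  have V: "lift a u = V"
    using X(2) xor_list_cancel[of "drop n V" u]
    by (simp add: lift_def u_def a_def xor_list_commute[of "take n V"])
  have even_a: "even (count_list a True)"
    using even_count_xor_list[of u "drop n V"] even_V X(2)
    by (simp add: a_def u_def flip: count_list_append)
  have in_copy: "X \<in> copy_edges n a b"
    if "i < n" "k = (if u ! i = b then n + i else i)" for i b
    using that lengths X(1) V unfolding copy_edges_def by blast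
  show thesis
  proof (cases "k < n")
    case True
    then have "X \<in> copy_edges n a (\<not> u ! k)"
      using in_copy[of k "\<not> u ! k"] by simp
    with that lengths even_a show thesis
      by blast
  next
    case False
    with X(3) have "k - n < n" "k = n + (k - n)"
      by simp_all
    then have "X \<in> copy_edges n a (u ! (k - n))"
      using in_copy[of "k - n" "u ! (k - n)"] by simp
    with that lengths even_a show thesis
      by blast
  qed
qed

theorem proposition2:
  fixes q :: nat
  assumes "q \<ge> 1"
  shows "divides_graph (stretch2 (hypercube q)) (hypercube (2 * q))"
proof (rule divides_graph_by_embeddings)
  let ?C = "{c. length (fst c) = q \<and> even (count_list (fst c) True)}"
  let ?f = "\<lambda>c. cube_embedding q (fst c) (snd c)"
  have images: "(`) (?f c) ` edges (stretch2 (hypercube q)) = copy_edges q (fst c) (snd c)"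
    if "c \<in> ?C" for c
    using that by (simp add: image_edges_cube_embedding)
  show "\<forall>e\<in>edges (stretch2 (hypercube q)). e \<subseteq> verts (stretch2 (hypercube q))"
    using stretch2_edges_subset_verts hypercube_edges_subset_verts by blast
  show "inj_on (?f c) (verts (stretch2 (hypercube q)))" if "c \<in> ?C" for c
    using that by (simp add: inj_on_cube_embedding)
  show "?f c ` verts (stretch2 (hypercube q)) \<subseteq> verts (hypercube (2 * q))" if "c \<in> ?C" for c
    using that by (auto simp: verts_hypercube length_cube_embedding)
  show "(`) (?f c) ` edges (stretch2 (hypercube q)) \<subseteq> edges (hypercube (2 * q))" if "c \<in> ?C" for c
    using that by (simp add: images copy_edges_subset)
  show "\<exists>c\<in>?C. X \<in> (`) (?f c) ` edges (stretch2 (hypercube q))"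
    if X: "X \<in> edges (hypercube (2 * q))" for X
  proof -
    obtain a b where "length a = q" "even (count_list a True)" "X \<in> copy_edges q a b"
      using X by (rule copy_edges_cover)
    with images[of "(a, b)"] show ?thesis
      by (intro bexI[of _ "(a, b)"]) simp_all
  qed
  show "c = d" if "c \<in> ?C" "d \<in> ?C"
    and "X \<in> (`) (?f c) ` edges (stretch2 (hypercube q))" "X \<in> (`) (?f d) ` edges (stretch2 (hypercube q))"
    for c d X
    using that copy_edges_disjoint[of "fst c" q "fst d" X "snd c" "snd d"]
    by (simp add: images prod_eq_iff)
qed

end
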